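(* Let $\Sigma_1$, $\Sigma_2$ be real, symmetric, positive definite $d\times d$ matrices and let $\varepsilon>0$. Then the unique symmetric, positive definite solution $X$ of the matrix equation $$X\Sigma_1X+\tfrac{\varepsilon}{2}X=\Sigma_2$$ is $$X_\varepsilon=\Sigma_1^{-1/2}\big(\Sigma_1^{1/2}\Sigma_2\Sigma_1^{1/2}+(\tfrac{\varepsilon}{4})^2 I_d\big)^{1/2}\Sigma_1^{-1/2}-\tfrac{\varepsilon}{4}\Sigma_1^{-1}.$$ Furthermore, the $2d\times 2d$ matrix $$\Sigma_\varepsilon=\begin{bmatrix}\Sigma_1 & \Sigma_1X_\varepsilon\\ X_\varepsilon\Sigma_1 & \Sigma_2\end{bmatrix}$$ is real, symmetric and positive definite, and $$\Sigma_\varepsilon^{-1}=\begin{bmatrix}\Sigma_1^{-1}+\frac{2}{\varepsilon}X_\varepsilon & -\frac{2}{\varepsilon}I_d\\ -\frac{2}{\varepsilon}I_d & \frac{2}{\varepsilon}X_\varepsilon^{-1}\end{bmatrix}.$$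
   Context: $A^{1/2}$ denotes the unique symmetric positive definite square root of a symmetric positive definite matrix $A$; $I_d$ is the $d\times d$ identity matrix. *)

theory Defs
  imports "HOL-Analysis.Analysis"
begin

definition sym_matrix :: "real^'n^'n \<Rightarrow> bool" where
  "sym_matrix A \<longleftrightarrow> transpose A = A"

definition pos_def :: "real^'n^'n \<Rightarrow> bool" where
  "pos_def A \<longleftrightarrow> sym_matrix A \<and> (\<forall>x. x \<noteq> 0 \<longrightarrow> x \<bullet> (A *v x) > 0)"

definition mat_sqrt :: "real^'n^'n \<Rightarrow> real^'n^'n" where
  "mat_sqrt A = (THE B. pos_def B \<and> B ** B = A)"

definition block_mat ::
  "real^'n^'n \<Rightarrow> real^'n^'n \<Rightarrow> real^'n^'n \<Rightarrow> real^'n^'n \<Rightarrow> real^('n + 'n)^('n + 'n)" where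
  "block_mat A B C D = (\<chi> i j. case i of
      Inl i' \<Rightarrow> (case j of Inl j' \<Rightarrow> A $ i' $ j' | Inr j' \<Rightarrow> B $ i' $ j')
    | Inr i' \<Rightarrow> (case j of Inl j' \<Rightarrow> C $ i' $ j' | Inr j' \<Rightarrow> D $ i' $ j'))"

end

theory Submission
  imports Defs
begin

text \<open>
  With \<open>R = \<Sigma>\<^sub>1\<^sup>1\<^sup>/\<^sup>2\<close> and \<open>c = \<epsilon>/4\<close>, completing the square shows that \<open>X\<close> solves
  \<open>X \<Sigma>\<^sub>1 X + 2c X = \<Sigma>\<^sub>2\<close> iff \<open>(R X R + c I)\<^sup>2 = R \<Sigma>\<^sub>2 R + c\<^sup>2 I\<close>. For positive definite \<open>X\<close>
  the matrix \<open>R X R + c I\<close> is positive definite, so by uniqueness of positive definite square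
  roots it equals \<open>(R \<Sigma>\<^sub>2 R + c\<^sup>2 I)\<^sup>1\<^sup>/\<^sup>2\<close>; this gives both the formula for \<open>X\<^sub>\<epsilon>\<close> and its
  uniqueness, and \<open>X\<^sub>\<epsilon>\<close> is positive definite because every eigenvalue \<open>\<mu>\<close> of that square
  root satisfies \<open>\<mu>\<^sup>2 > c\<^sup>2\<close>. The quadratic form of \<open>\<Sigma>\<^sub>\<epsilon>\<close> at \<open>(x, y)\<close> is
  \<open>(x + X y)\<^sup>T \<Sigma>\<^sub>1 (x + X y) + (\<epsilon>/2) y\<^sup>T X y\<close>, and the inverse is checked by block
  multiplication using the equation. Square roots come from the spectral theorem, proved by
  maximising the quadratic form on the unit sphere of invariant subspaces.
\<close>

section \<open>Matrix algebra\<close>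

lemma matrix_add_rdistrib: "((A::real^'n^'m) + B) ** C = A ** C + B ** C"
  by (simp add: matrix_matrix_mult_def vec_eq_iff sum.distrib algebra_simps)

lemma matrix_diff_ldistrib: "(A::real^'n^'m) ** (B - C) = A ** B - A ** C"
  by (simp add: matrix_matrix_mult_def vec_eq_iff sum_subtractf algebra_simps)

lemma matrix_diff_rdistrib: "((A::real^'n^'m) - B) ** C = A ** C - B ** C"
  by (simp add: matrix_matrix_mult_def vec_eq_iff sum_subtractf algebra_simps)

lemma matrix_scaleR_left: "(k *\<^sub>R (A::real^'n^'m)) ** B = k *\<^sub>R (A ** B)"
  by (simp add: scalar_matrix_assoc)

lemma matrix_scaleR_right: "(A::real^'n^'m) ** (k *\<^sub>R B) = k *\<^sub>R (A ** B)"
  by (simp add: matrix_scalar_ac scalar_matrix_assoc)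

lemma matrix_neg_right: "(A::real^'n^'m) ** (- B) = - (A ** B)"
  by (simp add: matrix_matrix_mult_def vec_eq_iff sum_negf)

lemmas matrix_mult_simps = matrix_add_ldistrib matrix_add_rdistrib matrix_diff_ldistrib
  matrix_diff_rdistrib matrix_scaleR_left matrix_scaleR_right matrix_neg_right
  matrix_mul_assoc matrix_mul_lid matrix_mul_rid

lemma transpose_add: "transpose (A + B) = transpose A + transpose (B :: real^'n^'m)"
  by (simp add: transpose_def vec_eq_iff)

lemma matrix_inv_right:
  fixes A :: "real^'n^'n"
  assumes "invertible A" shows "A ** matrix_inv A = mat 1"
  using assms unfolding invertible_def matrix_inv_def by (rule someI_ex[THEN conjunct1])

lemma matrix_inv_left:
  fixes A :: "real^'n^'n"
  assumes "invertible A" shows "matrix_inv A ** A = mat 1"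
  using matrix_inv_right[OF assms] matrix_left_right_inverse by blast

lemma matrix_inv_eqI:
  fixes A B :: "real^'n^'n"
  assumes "A ** B = mat 1" shows "matrix_inv A = B"
proof -
  have "invertible A" using assms invertible_right_inverse by blast
  then have "matrix_inv A = (matrix_inv A ** A) ** B"
    by (metis assms matrix_mul_assoc matrix_mul_rid)
  then show ?thesis using matrix_inv_left[OF \<open>invertible A\<close>] by simp
qed

lemma invertible_matrix_inv:
  fixes A :: "real^'n^'n"
  assumes "invertible A" shows "invertible (matrix_inv A)"
  using matrix_inv_left[OF assms] invertible_right_inverse by blast

lemma matrix_inv_mult:
  fixes A B :: "real^'n^'n"
  assumes "invertible A" "invertible B"
  shows "matrix_inv (A ** B) = matrix_inv B ** matrix_inv A"
proof (rule matrix_inv_eqI)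
  have "A ** B ** (matrix_inv B ** matrix_inv A) = A ** (B ** matrix_inv B) ** matrix_inv A"
    by (simp add: matrix_mul_assoc)
  then show "A ** B ** (matrix_inv B ** matrix_inv A) = mat 1"
    by (simp add: matrix_inv_right assms)
qed

lemma congruence_cancel:
  fixes R P Q :: "real^'n^'n"
  assumes "invertible R" "R ** P ** R = R ** Q ** R"
  shows "P = Q"
proof -
  have "matrix_inv R ** (R ** P ** R) ** matrix_inv R = P" for P
  proof -
    have "matrix_inv R ** (R ** P ** R) ** matrix_inv R
        = (matrix_inv R ** R) ** P ** (R ** matrix_inv R)"
      by (simp add: matrix_mul_assoc)
    then show ?thesis by (simp add: matrix_inv_left[OF assms(1)] matrix_inv_right[OF assms(1)])
  qed
  then show ?thesis using assms(2) by metis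
qed

lemma sum_matrix_vector_mult:
  fixes f :: "'a \<Rightarrow> real^'n^'m"
  assumes "finite B" shows "(\<Sum>b\<in>B. f b) *v x = (\<Sum>b\<in>B. f b *v x)"
  using assms by (induction B rule: finite_induct) (simp_all add: matrix_vector_mult_add_rdistrib)

lemma matrix_vector_mult_outer: "(\<chi> i j. b$i * b$j) *v x = (b \<bullet> x) *\<^sub>R (b::real^'n)"
  by (simp add: vec_eq_iff matrix_vector_mult_def inner_vec_def sum_distrib_left mult_ac)

section \<open>Symmetric and positive definite matrices\<close>

lemma sym_matrix_inner:
  assumes "sym_matrix A" shows "x \<bullet> (A *v y) = (A *v x) \<bullet> y"
proof -
  have "x \<bullet> (A *v y) = (x v* A) \<bullet> y" by (simp add: dot_lmul_matrix)
  also have "x v* A = transpose A *v x" by simp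
  also have "\<dots> = A *v x" using assms by (simp add: sym_matrix_def)
  finally show ?thesis .
qed

lemma sym_matrixI:
  assumes "\<And>x y. x \<bullet> (A *v y) = (A *v x) \<bullet> y" shows "sym_matrix A"
proof -
  have "(transpose A *v x) \<bullet> z = (A *v x) \<bullet> z" for x z
    by (metis assms dot_lmul_matrix transpose_matrix_vector)
  then have "transpose A *v x = A *v x" for x
    using vector_eq_rdot by blast
  then show ?thesis unfolding sym_matrix_def matrix_eq by blast
qed

lemma sym_matrix_inv:
  fixes A :: "real^'n^'n"
  assumes "sym_matrix A" "invertible A"
  shows "sym_matrix (matrix_inv A)"
proof -
  have "A ** transpose (matrix_inv A) = transpose (matrix_inv A ** A)"
    using assms(1) by (simp add: matrix_transpose_mul sym_matrix_def)
  also have "\<dots> = mat 1" using matrix_inv_left[OF assms(2)] by simp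
  finally show ?thesis unfolding sym_matrix_def by (metis matrix_inv_eqI)
qed

lemma pos_def_kernel:
  assumes "pos_def A" "A *v x = 0" shows "x = 0"
  using assms unfolding pos_def_def by (metis inner_zero_right less_irrefl)

lemma pos_def_nonneg:
  assumes "pos_def A" shows "0 \<le> x \<bullet> (A *v x)"
  using assms unfolding pos_def_def by (cases "x = 0") (auto intro: less_imp_le)

lemma pos_def_eigenvalue_pos:
  assumes "pos_def A" "v \<noteq> 0" "A *v v = \<mu> *\<^sub>R v"
  shows "0 < \<mu>"
proof -
  have "0 < v \<bullet> (A *v v)" using assms(1,2) by (simp add: pos_def_def)
  then have "0 < \<mu> * (v \<bullet> v)" using assms(3) by simp
  moreover have "0 < v \<bullet> v" using assms(2) by simp
  ultimately show ?thesis by (simp add: zero_less_mult_iff)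
qed

lemma pos_def_invertible:
  fixes A :: "real^'n^'n"
  assumes "pos_def A" shows "invertible A"
  using pos_def_kernel[OF assms] matrix_left_invertible_ker invertible_left_inverse by blast

lemma pos_def_add_scaled_id:
  fixes A :: "real^'n^'n"
  assumes A: "pos_def A" and c: "0 \<le> c"
  shows "pos_def (A + c *\<^sub>R mat 1)"
proof -
  have Av: "(A + c *\<^sub>R mat 1) *v x = A *v x + c *\<^sub>R x" for x
    by (simp add: matrix_vector_mult_add_rdistrib scaleR_matrix_vector_assoc[symmetric])
  have "sym_matrix A" using A by (simp add: pos_def_def)
  then have "sym_matrix (A + c *\<^sub>R mat 1)"
    by (intro sym_matrixI) (simp add: Av inner_add_left inner_add_right sym_matrix_inner)
  moreover have "0 < x \<bullet> ((A + c *\<^sub>R mat 1) *v x)" if "x \<noteq> 0" for x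
  proof -
    have "0 < x \<bullet> (A *v x)" using A that by (simp add: pos_def_def)
    moreover have "0 \<le> c * (x \<bullet> x)" using c by simp
    ultimately show ?thesis by (simp add: Av inner_add_right)
  qed
  ultimately show ?thesis unfolding pos_def_def by blast
qed

lemma pos_def_congruence:
  fixes Z P :: "real^'n^'n"
  assumes Z: "pos_def Z" and P: "sym_matrix P" "invertible P"
  shows "pos_def (P ** Z ** P)"
proof -
  have sZ: "sym_matrix Z" using Z by (simp add: pos_def_def)
  have PZP: "(P ** Z ** P) *v x = P *v (Z *v (P *v x))" for x
    by (simp add: matrix_vector_mul_assoc matrix_mul_assoc)
  have "sym_matrix (P ** Z ** P)"
    by (intro sym_matrixI) (simp add: PZP sym_matrix_inner[OF P(1)] sym_matrix_inner[OF sZ])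
  moreover have "0 < x \<bullet> ((P ** Z ** P) *v x)" if "x \<noteq> 0" for x
  proof -
    have "P *v x \<noteq> 0"
      using P(2) that by (metis invertible_def matrix_vector_mul_assoc matrix_vector_mul_lid
          matrix_vector_mult_0_right)
    then show ?thesis using Z unfolding PZP sym_matrix_inner[OF P(1)] pos_def_def by blast
  qed
  ultimately show ?thesis unfolding pos_def_def by blast
qed

section \<open>The spectral theorem\<close>

definition orthonormal_basis :: "'a::real_inner set \<Rightarrow> bool" where
  "orthonormal_basis B \<longleftrightarrow>
     finite B \<and> pairwise orthogonal B \<and> (\<forall>b\<in>B. norm b = 1) \<and> span B = UNIV"

lemma orthonormal_basis_nonzero: "orthonormal_basis B \<Longrightarrow> b \<in> B \<Longrightarrow> b \<noteq> 0"
  by (auto simp: orthonormal_basis_def)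

lemma orthonormal_basis_inner:
  assumes "orthonormal_basis B" "b \<in> B" "b' \<in> B"
  shows "b \<bullet> b' = (if b = b' then 1 else 0)"
  using assms unfolding orthonormal_basis_def pairwise_def orthogonal_def by (auto simp: norm_eq_1)

lemma orthonormal_basis_expansion:
  assumes "orthonormal_basis B" shows "(\<Sum>b\<in>B. (x \<bullet> b) *\<^sub>R b) = x"
  using assms orthonormal_basis_expand[of B x] unfolding orthonormal_basis_def by auto

lemma orthonormal_basis_matrix_eqI:
  fixes A C :: "real^'n^'n"
  assumes "orthonormal_basis B" "\<And>b. b \<in> B \<Longrightarrow> A *v b = C *v b"
  shows "A = C"
proof -
  have "A *v x = C *v x" for x
    using linear_eq_on_span[OF matrix_vector_mul_linear matrix_vector_mul_linear, of B A C x] assms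
    unfolding orthonormal_basis_def by auto
  then show ?thesis unfolding matrix_eq by blast
qed

lemma orthonormal_basis_weighted_sum_pos:
  assumes B: "orthonormal_basis B" and l: "\<And>b. b \<in> B \<Longrightarrow> 0 < l b" and x: "x \<noteq> 0"
  shows "0 < (\<Sum>b\<in>B. l b * (x \<bullet> b)\<^sup>2)"
proof -
  obtain b where b: "b \<in> B" "x \<bullet> b \<noteq> 0"
  proof (rule ccontr)
    assume "\<not> thesis"
    then have "(\<Sum>b\<in>B. (x \<bullet> b) *\<^sub>R b) = 0" using that by (intro sum.neutral) auto
    then show False using x orthonormal_basis_expansion[OF B, of x] by simp
  qed
  have "finite B" using B by (simp add: orthonormal_basis_def)
  moreover have "0 < l b * (x \<bullet> b)\<^sup>2" using b l by simp
  moreover have "0 \<le> l b' * (x \<bullet> b')\<^sup>2" if "b' \<in> B" for b'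
    using l[OF that] by simp
  ultimately show ?thesis using b(1) by (intro sum_pos2)
qed

definition orthonormal_eigenbasis :: "real^'n^'n \<Rightarrow> (real^'n) set \<Rightarrow> (real^'n \<Rightarrow> real) \<Rightarrow> bool"
  where "orthonormal_eigenbasis A B l \<longleftrightarrow> orthonormal_basis B \<and> (\<forall>b\<in>B. A *v b = l b *\<^sub>R b)"

lemma eigenbasis_quadratic_form:
  fixes A :: "real^'n^'n"
  assumes "orthonormal_eigenbasis A B l"
  shows "x \<bullet> (A *v x) = (\<Sum>b\<in>B. l b * (x \<bullet> b)\<^sup>2)"
proof -
  have B: "orthonormal_basis B" using assms by (simp add: orthonormal_eigenbasis_def)
  have "A *v x = (\<Sum>b\<in>B. (x \<bullet> b) *\<^sub>R (A *v b))"
    by (subst orthonormal_basis_expansion[OF B, of x, symmetric])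
       (simp add: vec.sum matrix_vector_mult_scaleR)
  also have "\<dots> = (\<Sum>b\<in>B. (l b * (x \<bullet> b)) *\<^sub>R b)"
    using assms by (intro sum.cong refl) (simp add: orthonormal_eigenbasis_def)
  finally show ?thesis by (simp add: inner_sum_right power2_eq_square mult_ac)
qed

lemma quadratic_form_le_sphere_max:
  fixes A :: "real^'n^'n"
  assumes S: "subspace S" and u: "u \<in> S"
    and max: "\<forall>w\<in>S. norm w = 1 \<longrightarrow> w \<bullet> (A *v w) \<le> l"
  shows "u \<bullet> (A *v u) \<le> l * (u \<bullet> u)"
proof (cases "u = 0")
  case False
  let ?n = "norm u"
  have n: "0 < ?n" using False by simp
  have "u /\<^sub>R ?n \<in> S" "norm (u /\<^sub>R ?n) = 1" using S u n by (simp_all add: subspace_scale)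
  then have "(u /\<^sub>R ?n) \<bullet> (A *v (u /\<^sub>R ?n)) \<le> l" using max by blast
  moreover have "u \<bullet> (A *v u) = ?n\<^sup>2 * ((u /\<^sub>R ?n) \<bullet> (A *v (u /\<^sub>R ?n)))"
    using n by (simp add: matrix_vector_mult_scaleR power2_eq_square field_simps)
  ultimately have "u \<bullet> (A *v u) \<le> ?n\<^sup>2 * l"
    by (metis mult_left_mono zero_le_power2)
  then show ?thesis by (simp add: power2_norm_eq_inner mult.commute)
qed simp

lemma nonpos_if_linear_le_quadratic:
  fixes a K :: real
  assumes le: "\<And>t. 2 * t * a \<le> t\<^sup>2 * K"
  shows "a \<le> 0"
proof (rule ccontr)
  assume "\<not> a \<le> 0"
  then have a: "0 < a" by simp
  define t where "t = a / (\<bar>K\<bar> + 1)"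
  have t: "0 < t" unfolding t_def using a by simp
  have "t * (2 * a) \<le> t * (t * \<bar>K\<bar>)"
    using le[of t] mult_left_mono[of K "\<bar>K\<bar>" "t\<^sup>2"]
    by (simp add: power2_eq_square mult.assoc mult.left_commute) (meson abs_ge_self order_trans)
  then have "2 * a \<le> t * \<bar>K\<bar>" using t by simp
  also have "t * \<bar>K\<bar> < a" unfolding t_def using a by (simp add: field_simps)
  finally show False using a by simp
qed

lemma sphere_max_is_eigenvector:
  fixes A :: "real^'n^'n"
  assumes sym: "sym_matrix A" and S: "subspace S" and inv: "\<forall>x\<in>S. A *v x \<in> S"
    and v: "v \<in> S" "norm v = 1"
    and max: "\<forall>u\<in>S. norm u = 1 \<longrightarrow> u \<bullet> (A *v u) \<le> v \<bullet> (A *v v)"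
  shows "A *v v = (v \<bullet> (A *v v)) *\<^sub>R v"
proof -
  define l where "l = v \<bullet> (A *v v)"
  define w where "w = A *v v - l *\<^sub>R v"
  define K where "K = l * (w \<bullet> w) - w \<bullet> (A *v w)"
  have vv: "v \<bullet> v = 1" using v by (simp add: norm_eq_1)
  have wS: "w \<in> S" unfolding w_def using S inv v by (simp add: subspace_diff subspace_scale)
  have vw: "v \<bullet> w = 0" unfolding w_def l_def by (simp add: inner_diff_right vv)
  have wAv: "w \<bullet> (A *v v) = w \<bullet> w"
    unfolding w_def by (simp add: inner_diff_left inner_diff_right l_def inner_commute vv)
  have vAw: "v \<bullet> (A *v w) = w \<bullet> w"
    using sym_matrix_inner[OF sym, of v w] wAv by (simp add: inner_commute)
  have perturb: "2 * t * (w \<bullet> w) \<le> t\<^sup>2 * K" for t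
  proof -
    have "v + t *\<^sub>R w \<in> S" using S v wS by (simp add: subspace_add subspace_scale)
    then have "(v + t *\<^sub>R w) \<bullet> (A *v (v + t *\<^sub>R w)) \<le> l * ((v + t *\<^sub>R w) \<bullet> (v + t *\<^sub>R w))"
      using quadratic_form_le_sphere_max[OF S _ max[folded l_def]] by blast
    moreover have "(v + t *\<^sub>R w) \<bullet> (A *v (v + t *\<^sub>R w)) = l + 2 * t * (w \<bullet> w) + t\<^sup>2 * (w \<bullet> (A *v w))"
      by (simp add: matrix_vector_right_distrib matrix_vector_mult_scaleR inner_add_left
          inner_add_right wAv vAw l_def power2_eq_square algebra_simps)
    moreover have "(v + t *\<^sub>R w) \<bullet> (v + t *\<^sub>R w) = 1 + t\<^sup>2 * (w \<bullet> w)"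
      by (simp add: inner_add_left inner_add_right vv vw inner_commute power2_eq_square)
    ultimately have "l + 2 * t * (w \<bullet> w) + t\<^sup>2 * (w \<bullet> (A *v w)) \<le> l * (1 + t\<^sup>2 * (w \<bullet> w))"
      by simp
    then show ?thesis by (simp add: K_def right_diff_distrib distrib_left mult.left_commute)
  qed
  have "w \<bullet> w \<le> 0" by (rule nonpos_if_linear_le_quadratic[OF perturb])
  then have "w = 0" using inner_gt_zero_iff not_le by blast
  then show ?thesis unfolding w_def l_def by simp
qed

lemma invariant_subspace_eigenvector:
  fixes A :: "real^'n^'n"
  assumes sym: "sym_matrix A" and S: "subspace S" and inv: "\<forall>x\<in>S. A *v x \<in> S"
    and x: "x \<in> S" "x \<noteq> 0"
  obtains v where "v \<in> S" "norm v = 1" "A *v v = (v \<bullet> (A *v v)) *\<^sub>R v"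
proof -
  let ?K = "S \<inter> sphere 0 1"
  have "x /\<^sub>R norm x \<in> ?K" using x S by (simp add: subspace_scale)
  then have "?K \<noteq> {}" by blast
  moreover have "compact ?K" by (intro closed_Int_compact closed_subspace S compact_sphere)
  moreover have "continuous_on ?K (\<lambda>u. u \<bullet> (A *v u))" by (intro continuous_intros)
  ultimately obtain v where "v \<in> ?K" and "\<forall>u\<in>?K. u \<bullet> (A *v u) \<le> v \<bullet> (A *v v)"
    using continuous_attains_sup by blast
  then show ?thesis using that sphere_max_is_eigenvector[OF sym S inv] by auto
qed

lemma eigenvector_orthogonal_complement:
  fixes A :: "real^'n^'n"
  assumes sym: "sym_matrix A" and S: "subspace S" and inv: "\<forall>x\<in>S. A *v x \<in> S"
    and ev: "A *v v = \<mu> *\<^sub>R v"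
  shows "subspace {y \<in> S. v \<bullet> y = 0}" and "\<forall>y\<in>{y \<in> S. v \<bullet> y = 0}. A *v y \<in> {y \<in> S. v \<bullet> y = 0}"
proof -
  show "subspace {y \<in> S. v \<bullet> y = 0}"
    using S unfolding subspace_def by (auto simp: inner_add_right)
  have "v \<bullet> (A *v y) = \<mu> * (v \<bullet> y)" for y
    using sym_matrix_inner[OF sym, of v y] ev by simp
  then show "\<forall>y\<in>{y \<in> S. v \<bullet> y = 0}. A *v y \<in> {y \<in> S. v \<bullet> y = 0}"
    using inv by simp
qed

lemma span_insert_orthogonal_complement:
  assumes S: "subspace S" and v: "v \<in> S" "v \<bullet> v = 1"
    and span: "{y \<in> S. v \<bullet> y = 0} \<subseteq> span B"
  shows "S \<subseteq> span (insert v B)"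
proof
  fix y assume y: "y \<in> S"
  have "y - (v \<bullet> y) *\<^sub>R v \<in> {y \<in> S. v \<bullet> y = 0}"
    using y v S by (simp add: subspace_diff subspace_scale inner_diff_right)
  then have "y - (v \<bullet> y) *\<^sub>R v \<in> span (insert v B)"
    using span span_mono[of B "insert v B"] by auto
  then show "y \<in> span (insert v B)"
    by (metis diff_add_cancel span_add span_base span_mul insertI1)
qed

lemma invariant_subspace_eigenbasis:
  fixes A :: "real^'n^'n"
  assumes sym: "sym_matrix A"
  shows "subspace S \<Longrightarrow> \<forall>x\<in>S. A *v x \<in> S \<Longrightarrow>
    \<exists>B. B \<subseteq> S \<and> finite B \<and> pairwise orthogonal B \<and>
        (\<forall>b\<in>B. norm b = 1 \<and> A *v b = (b \<bullet> (A *v b)) *\<^sub>R b) \<and> S \<subseteq> span B"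
proof (induction "dim S" arbitrary: S rule: less_induct)
  case less
  show ?case
  proof (cases "S \<subseteq> {0}")
    case True
    then show ?thesis by (intro exI[of _ "{}"]) auto
  next
    case False
    then obtain x where "x \<in> S" "x \<noteq> 0" by auto
    then obtain v where vS: "v \<in> S" and nv: "norm v = 1" and ev: "A *v v = (v \<bullet> (A *v v)) *\<^sub>R v"
      using invariant_subspace_eigenvector[OF sym less.prems] by blast
    have vv: "v \<bullet> v = 1" using nv by (simp add: norm_eq_1)
    define S' where "S' = {y \<in> S. v \<bullet> y = 0}"
    have sub': "subspace S'" and inv': "\<forall>y\<in>S'. A *v y \<in> S'"
      unfolding S'_def by (rule eigenvector_orthogonal_complement[OF sym less.prems ev])+
    have "v \<notin> S'" using vv by (simp add: S'_def)
    then have "S' \<subset> S" using vS unfolding S'_def by blast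
    then have "dim S' < dim S"
      using dim_psubset span_eq_iff sub' less.prems(1) by metis
    then obtain B' where B': "B' \<subseteq> S'" "finite B'" "pairwise orthogonal B'"
      "\<forall>b\<in>B'. norm b = 1 \<and> A *v b = (b \<bullet> (A *v b)) *\<^sub>R b" "S' \<subseteq> span B'"
      using less.hyps[OF _ sub' inv'] by blast
    have "S \<subseteq> span (insert v B')"
      using span_insert_orthogonal_complement[OF less.prems(1) vS vv] B'(5) by (simp add: S'_def)
    moreover have "pairwise orthogonal (insert v B')"
      using B'(1,3) vv unfolding S'_def
      by (auto simp: pairwise_insert orthogonal_def inner_commute)
    ultimately show ?thesis
      using B' vS nv ev unfolding S'_def by (intro exI[of _ "insert v B'"]) auto
  qed
qed

lemma sym_matrix_eigenbasis:
  fixes A :: "real^'n^'n"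
  assumes "sym_matrix A"
  obtains B l where "orthonormal_eigenbasis A B l"
proof -
  obtain B where "finite B" "pairwise orthogonal B" "UNIV \<subseteq> span B"
    "\<forall>b\<in>B. norm b = 1 \<and> A *v b = (b \<bullet> (A *v b)) *\<^sub>R b"
    using invariant_subspace_eigenbasis[OF assms, of UNIV] by auto
  then have "orthonormal_eigenbasis A B (\<lambda>b. b \<bullet> (A *v b))"
    by (auto simp: orthonormal_eigenbasis_def orthonormal_basis_def)
  then show ?thesis by (rule that)
qed

lemma sym_matrix_pos_eigenvalues_imp_pos_def:
  fixes M :: "real^'n^'n"
  assumes sym: "sym_matrix M"
    and ev: "\<And>v \<mu>. v \<noteq> 0 \<Longrightarrow> M *v v = \<mu> *\<^sub>R v \<Longrightarrow> 0 < \<mu>"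
  shows "pos_def M"
proof -
  obtain B l where E: "orthonormal_eigenbasis M B l"
    using sym_matrix_eigenbasis[OF sym] by blast
  then have B: "orthonormal_basis B" by (simp add: orthonormal_eigenbasis_def)
  have l: "0 < l b" if "b \<in> B" for b
    using E ev[OF orthonormal_basis_nonzero[OF B that]] that by (simp add: orthonormal_eigenbasis_def)
  have "0 < x \<bullet> (M *v x)" if "x \<noteq> 0" for x
    unfolding eigenbasis_quadratic_form[OF E] by (rule orthonormal_basis_weighted_sum_pos[OF B l that])
  then show ?thesis using sym unfolding pos_def_def by blast
qed

section \<open>Positive definite square roots\<close>

lemma pos_def_sqrt_exists:
  fixes A :: "real^'n^'n"
  assumes A: "pos_def A"
  shows "\<exists>R. pos_def R \<and> R ** R = A"
proof -
  obtain B l where E: "orthonormal_eigenbasis A B l"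
    using sym_matrix_eigenbasis A unfolding pos_def_def by blast
  then have B: "orthonormal_basis B" and eig: "\<And>b. b \<in> B \<Longrightarrow> A *v b = l b *\<^sub>R b"
    by (simp_all add: orthonormal_eigenbasis_def)
  have l: "0 < l b" if "b \<in> B" for b
    using pos_def_eigenvalue_pos[OF A orthonormal_basis_nonzero[OF B that] eig[OF that]] .
  define R where "R = (\<Sum>b\<in>B. sqrt (l b) *\<^sub>R (\<chi> i j. b$i * b$j))"
  have fin: "finite B" using B by (simp add: orthonormal_basis_def)
  have Rx: "R *v x = (\<Sum>b\<in>B. (sqrt (l b) * (b \<bullet> x)) *\<^sub>R b)" for x
    unfolding R_def sum_matrix_vector_mult[OF fin]
    by (simp add: scaleR_matrix_vector_assoc[symmetric] matrix_vector_mult_outer)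
  have Rb: "R *v b = sqrt (l b) *\<^sub>R b" if b: "b \<in> B" for b
  proof -
    have "R *v b = (\<Sum>b'\<in>B. if b' = b then sqrt (l b) *\<^sub>R b else 0)"
      unfolding Rx by (intro sum.cong refl) (simp add: orthonormal_basis_inner[OF B _ b])
    also have "\<dots> = sqrt (l b) *\<^sub>R b" using fin b by simp
    finally show ?thesis .
  qed
  have "sym_matrix R"
    by (rule sym_matrixI) (simp add: Rx inner_sum_left inner_sum_right inner_commute mult_ac)
  moreover have "0 < x \<bullet> (R *v x)" if "x \<noteq> 0" for x
  proof -
    have E': "orthonormal_eigenbasis R B (\<lambda>b. sqrt (l b))"
      using B Rb by (simp add: orthonormal_eigenbasis_def)
    show ?thesis
      unfolding eigenbasis_quadratic_form[OF E']
      by (rule orthonormal_basis_weighted_sum_pos[OF B _ that]) (simp add: l)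
  qed
  moreover have "R ** R = A"
  proof (rule orthonormal_basis_matrix_eqI[OF B])
    fix b assume "b \<in> B"
    then show "(R ** R) *v b = A *v b"
      using l eig by (simp add: Rb matrix_vector_mult_scaleR less_imp_le flip: matrix_vector_mul_assoc)
  qed
  ultimately show ?thesis unfolding pos_def_def by blast
qed

lemma pos_def_sqrt_unique:
  fixes P Q :: "real^'n^'n"
  assumes P: "pos_def P" and Q: "pos_def Q" and PQ: "P ** P = Q ** Q"
  shows "P = Q"
proof -
  obtain B l where E: "orthonormal_eigenbasis Q B l"
    using sym_matrix_eigenbasis Q unfolding pos_def_def by blast
  then have B: "orthonormal_basis B" and eig: "\<And>b. b \<in> B \<Longrightarrow> Q *v b = l b *\<^sub>R b"
    by (simp_all add: orthonormal_eigenbasis_def)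
  show ?thesis
  proof (rule orthonormal_basis_matrix_eqI[OF B])
    fix b assume b: "b \<in> B"
    have "0 < l b" using pos_def_eigenvalue_pos[OF Q orthonormal_basis_nonzero[OF B b] eig[OF b]] .
    then have pd: "pos_def (P + l b *\<^sub>R mat 1)" by (intro pos_def_add_scaled_id[OF P]) simp
    have Pl: "(P + l b *\<^sub>R mat 1) *v y = P *v y + l b *\<^sub>R y" for y
      by (simp add: matrix_vector_mult_add_rdistrib scaleR_matrix_vector_assoc[symmetric])
    have "(P + l b *\<^sub>R mat 1) *v (P *v b - l b *\<^sub>R b) = P *v (P *v b) - (l b * l b) *\<^sub>R b"
      unfolding Pl by (simp add: matrix_vector_mult_diff_distrib matrix_vector_mult_scaleR algebra_simps)
    also have "P *v (P *v b) = Q *v (Q *v b)" by (simp add: matrix_vector_mul_assoc PQ)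
    also have "\<dots> - (l b * l b) *\<^sub>R b = 0" by (simp add: eig[OF b] matrix_vector_mult_scaleR)
    finally have "P *v b - l b *\<^sub>R b = 0" by (rule pos_def_kernel[OF pd])
    then show "P *v b = Q *v b" by (simp add: eig[OF b])
  qed
qed

lemma mat_sqrt:
  fixes A :: "real^'n^'n"
  assumes "pos_def A"
  shows "pos_def (mat_sqrt A)" "mat_sqrt A ** mat_sqrt A = A"
proof -
  have "\<exists>!R. pos_def R \<and> R ** R = A"
    using pos_def_sqrt_exists[OF assms] pos_def_sqrt_unique by metis
  then have "pos_def (mat_sqrt A) \<and> mat_sqrt A ** mat_sqrt A = A"
    unfolding mat_sqrt_def by (rule theI')
  then show "pos_def (mat_sqrt A)" "mat_sqrt A ** mat_sqrt A = A" by auto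
qed

lemma mat_sqrt_eqI:
  fixes A R :: "real^'n^'n"
  assumes "pos_def A" "pos_def R" "R ** R = A"
  shows "mat_sqrt A = R"
  using pos_def_sqrt_unique mat_sqrt[OF assms(1)] assms(2,3) by metis

lemma pos_def_sub_scaled_id:
  fixes T :: "real^'n^'n"
  assumes T: "pos_def T" and TT: "pos_def (T ** T - c\<^sup>2 *\<^sub>R mat 1)" and c: "0 \<le> c"
  shows "pos_def (T - c *\<^sub>R mat 1)"
proof (rule sym_matrix_pos_eigenvalues_imp_pos_def)
  have Tc: "(T - c *\<^sub>R mat 1) *v x = T *v x - c *\<^sub>R x" for x
    by (simp add: matrix_vector_mult_diff_rdistrib scaleR_matrix_vector_assoc[symmetric])
  have "sym_matrix T" using T by (simp add: pos_def_def)
  then show "sym_matrix (T - c *\<^sub>R mat 1)"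
    by (intro sym_matrixI) (simp add: Tc inner_diff_left inner_diff_right sym_matrix_inner)
  fix v \<mu> assume v: "v \<noteq> 0" and ev: "(T - c *\<^sub>R mat 1) *v v = \<mu> *\<^sub>R v"
  have Tv: "T *v v = (\<mu> + c) *\<^sub>R v" using ev unfolding Tc by (simp add: algebra_simps)
  have "(T ** T) *v v = (\<mu> + c)\<^sup>2 *\<^sub>R v"
    by (simp add: Tv matrix_vector_mult_scaleR power2_eq_square flip: matrix_vector_mul_assoc)
  then have "(T ** T - c\<^sup>2 *\<^sub>R mat 1) *v v = ((\<mu> + c)\<^sup>2 - c\<^sup>2) *\<^sub>R v"
    by (simp add: matrix_vector_mult_diff_rdistrib scaleR_matrix_vector_assoc[symmetric]
        scaleR_left_diff_distrib)
  then have "0 < (\<mu> + c)\<^sup>2 - c\<^sup>2" by (rule pos_def_eigenvalue_pos[OF TT v])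
  moreover have "0 < \<mu> + c" by (rule pos_def_eigenvalue_pos[OF T v Tv])
  ultimately show "0 < \<mu>" using c by (smt (verit) power_mono)
qed

section \<open>The matrix Riccati equation\<close>

lemma riccati_congruence:
  fixes R S1 S2 X :: "real^'n^'n"
  assumes R: "invertible R" and RR: "R ** R = S1"
  shows "X ** S1 ** X + (2 * c) *\<^sub>R X = S2 \<longleftrightarrow>
    (R ** X ** R + c *\<^sub>R mat 1) ** (R ** X ** R + c *\<^sub>R mat 1) = R ** S2 ** R + c\<^sup>2 *\<^sub>R mat 1"
proof -
  have two: "(2 * c) *\<^sub>R A = c *\<^sub>R A + c *\<^sub>R A" for A :: "real^'n^'n"
    by (metis mult_2 scaleR_add_left)
  have "(R ** X ** R + c *\<^sub>R mat 1) ** (R ** X ** R + c *\<^sub>R mat 1)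
      = R ** (X ** S1 ** X + (2 * c) *\<^sub>R X) ** R + c\<^sup>2 *\<^sub>R mat 1"
    by (simp only: matrix_add_ldistrib matrix_add_rdistrib matrix_scaleR_left matrix_scaleR_right
        matrix_mul_lid matrix_mul_rid two power2_eq_square scaleR_scaleR flip: RR)
       (simp only: matrix_mul_assoc scaleR_add_right scaleR_scaleR add_ac)
  then show ?thesis using congruence_cancel[OF R] by auto
qed

lemma riccati_pos_def_solution_sqrt:
  fixes S1 S2 X :: "real^'n^'n"
  assumes S1: "pos_def S1" and S2: "pos_def S2" and c: "0 < c"
    and X: "pos_def X" and eq: "X ** S1 ** X + (2 * c) *\<^sub>R X = S2"
  shows "mat_sqrt S1 ** X ** mat_sqrt S1 + c *\<^sub>R mat 1
           = mat_sqrt (mat_sqrt S1 ** S2 ** mat_sqrt S1 + c\<^sup>2 *\<^sub>R mat 1)"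
proof -
  let ?R = "mat_sqrt S1"
  have pR: "pos_def ?R" and RR: "?R ** ?R = S1" using mat_sqrt[OF S1] by auto
  have sR: "sym_matrix ?R" using pR by (simp add: pos_def_def)
  have invR: "invertible ?R" by (rule pos_def_invertible[OF pR])
  have "pos_def (?R ** S2 ** ?R + c\<^sup>2 *\<^sub>R mat 1)"
    using pos_def_congruence[OF S2 sR invR] by (intro pos_def_add_scaled_id) simp_all
  moreover have "pos_def (?R ** X ** ?R + c *\<^sub>R mat 1)"
    using pos_def_congruence[OF X sR invR] c by (intro pos_def_add_scaled_id) simp_all
  moreover have "(?R ** X ** ?R + c *\<^sub>R mat 1) ** (?R ** X ** ?R + c *\<^sub>R mat 1)
      = ?R ** S2 ** ?R + c\<^sup>2 *\<^sub>R mat 1"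
    using eq unfolding riccati_congruence[OF invR RR] .
  ultimately show ?thesis by (intro mat_sqrt_eqI[symmetric])
qed

lemma riccati_pos_def_unique:
  fixes S1 S2 X Y :: "real^'n^'n"
  assumes S1: "pos_def S1" and S2: "pos_def S2" and c: "0 < c"
    and X: "pos_def X" "X ** S1 ** X + (2 * c) *\<^sub>R X = S2"
    and Y: "pos_def Y" "Y ** S1 ** Y + (2 * c) *\<^sub>R Y = S2"
  shows "X = Y"
proof (rule congruence_cancel)
  show "invertible (mat_sqrt S1)" by (rule pos_def_invertible[OF mat_sqrt(1)[OF S1]])
  show "mat_sqrt S1 ** X ** mat_sqrt S1 = mat_sqrt S1 ** Y ** mat_sqrt S1"
    using riccati_pos_def_solution_sqrt[OF S1 S2 c X] riccati_pos_def_solution_sqrt[OF S1 S2 c Y]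
    by (metis add_right_cancel)
qed

lemma riccati_pos_def_solution:
  fixes S1 S2 :: "real^'n^'n" and c :: real
  assumes S1: "pos_def S1" and S2: "pos_def S2" and c: "0 < c"
  defines "R \<equiv> mat_sqrt S1"
  defines "X \<equiv> matrix_inv R ** mat_sqrt (R ** S2 ** R + c\<^sup>2 *\<^sub>R mat 1) ** matrix_inv R
                - c *\<^sub>R matrix_inv S1"
  shows "pos_def X" and "X ** S1 ** X + (2 * c) *\<^sub>R X = S2"
proof -
  define M where "M = R ** S2 ** R + c\<^sup>2 *\<^sub>R mat 1"
  define T where "T = mat_sqrt M"
  define Ri where "Ri = matrix_inv R"
  have pR: "pos_def R" and RR: "R ** R = S1" unfolding R_def using mat_sqrt[OF S1] by auto
  have sR: "sym_matrix R" using pR by (simp add: pos_def_def)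
  have invR: "invertible R" by (rule pos_def_invertible[OF pR])
  have S1inv: "matrix_inv S1 = Ri ** Ri"
    unfolding RR[symmetric] Ri_def by (rule matrix_inv_mult[OF invR invR])
  have pRS2R: "pos_def (R ** S2 ** R)" by (rule pos_def_congruence[OF S2 sR invR])
  then have pM: "pos_def M" unfolding M_def by (intro pos_def_add_scaled_id) simp_all
  have pT: "pos_def T" and TT: "T ** T = M" unfolding T_def using mat_sqrt[OF pM] by auto
  define Z where "Z = T - c *\<^sub>R mat 1"
  have "T ** T - c\<^sup>2 *\<^sub>R mat 1 = R ** S2 ** R" by (simp add: TT M_def)
  then have pZ: "pos_def Z" unfolding Z_def using pos_def_sub_scaled_id[OF pT] pRS2R c by simp
  have XZ: "X = Ri ** Z ** Ri"
    unfolding X_def Z_def S1inv Ri_def[symmetric] M_def[symmetric] T_def[symmetric]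
    by (simp add: matrix_mult_simps)
  have RXR: "R ** X ** R = Z"
  proof -
    have "R ** X ** R = (R ** Ri) ** Z ** (Ri ** R)" by (simp add: XZ matrix_mul_assoc)
    then show ?thesis by (simp add: Ri_def matrix_inv_left[OF invR] matrix_inv_right[OF invR])
  qed
  show "pos_def X"
    unfolding XZ Ri_def
    by (rule pos_def_congruence[OF pZ sym_matrix_inv[OF sR invR] invertible_matrix_inv[OF invR]])
  show "X ** S1 ** X + (2 * c) *\<^sub>R X = S2"
    unfolding riccati_congruence[OF invR RR] RXR M_def[symmetric] by (simp add: Z_def TT)
qed

section \<open>Block matrices\<close>

definition block_fst :: "real^('n + 'n) \<Rightarrow> real^'n" where
  "block_fst z = (\<chi> i. z $ Inl i)"

definition block_snd :: "real^('n + 'n) \<Rightarrow> real^'n" where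
  "block_snd z = (\<chi> i. z $ Inr i)"

lemma sum_UNIV_Plus:
  "(\<Sum>k\<in>UNIV. f k) = (\<Sum>i\<in>UNIV. f (Inl i)) + (\<Sum>i\<in>UNIV. f (Inr i))"
  for f :: "'a::finite + 'b::finite \<Rightarrow> 'c::comm_monoid_add"
  using sum.Plus[of "UNIV :: 'a set" "UNIV :: 'b set" f] by (simp add: comp_def)

lemma inner_block: "z \<bullet> w = block_fst z \<bullet> block_fst w + block_snd z \<bullet> block_snd w"
  by (simp add: inner_vec_def block_fst_def block_snd_def sum_UNIV_Plus)

lemma block_fst_block_mat_mult:
  "block_fst (block_mat A B C D *v z) = A *v block_fst z + B *v block_snd z"
  by (simp add: block_fst_def block_snd_def block_mat_def matrix_vector_mult_def vec_eq_iff
      sum_UNIV_Plus)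

lemma block_snd_block_mat_mult:
  "block_snd (block_mat A B C D *v z) = C *v block_fst z + D *v block_snd z"
  by (simp add: block_fst_def block_snd_def block_mat_def matrix_vector_mult_def vec_eq_iff
      sum_UNIV_Plus)

lemma block_eq_0_iff: "z = 0 \<longleftrightarrow> block_fst z = 0 \<and> block_snd z = 0"
proof
  assume "block_fst z = 0 \<and> block_snd z = 0"
  then have "z $ k = 0" for k
    by (cases k) (auto simp: block_fst_def block_snd_def vec_eq_iff)
  then show "z = 0" by (simp add: vec_eq_iff)
qed (simp add: block_fst_def block_snd_def vec_eq_iff)

lemma transpose_block_mat:
  "transpose (block_mat A B C D) = block_mat (transpose A) (transpose C) (transpose B) (transpose D)"
  by (simp add: block_mat_def transpose_def vec_eq_iff split: sum.split)

lemma block_mat_mult: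
  "block_mat A B C D ** block_mat E F G H =
   block_mat (A ** E + B ** G) (A ** F + B ** H) (C ** E + D ** G) (C ** F + D ** H)"
  by (simp add: block_mat_def matrix_matrix_mult_def vec_eq_iff sum_UNIV_Plus split: sum.split)

lemma block_mat_id: "block_mat (mat 1) 0 0 (mat 1) = (mat 1 :: real^('n::finite + 'n)^('n + 'n))"
  by (simp add: block_mat_def mat_def vec_eq_iff split: sum.split)

lemma riccati_block_pos_def:
  fixes S1 S2 X :: "real^'n^'n"
  assumes S1: "pos_def S1" and X: "pos_def X" and c: "0 < c"
    and eq: "X ** S1 ** X + c *\<^sub>R X = S2"
  shows "pos_def (block_mat S1 (S1 ** X) (X ** S1) S2)" (is "pos_def ?S")
proof -
  let ?x = block_fst and ?y = block_snd
  have sS1: "sym_matrix S1" and sX: "sym_matrix X" using S1 X by (auto simp: pos_def_def)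
  then have "sym_matrix S2"
    unfolding eq[symmetric] sym_matrix_def
    by (simp add: transpose_add transpose_scalar matrix_transpose_mul matrix_mul_assoc)
  then have sym: "sym_matrix ?S"
    using sS1 sX unfolding sym_matrix_def by (simp add: transpose_block_mat matrix_transpose_mul)
  have S2v: "S2 *v y = X *v (S1 *v (X *v y)) + c *\<^sub>R (X *v y)" for y
    unfolding eq[symmetric]
    by (simp add: matrix_vector_mult_add_rdistrib matrix_vector_mul_assoc[symmetric]
        scaleR_matrix_vector_assoc[symmetric])
  have quad: "z \<bullet> (?S *v z)
      = (?x z + X *v ?y z) \<bullet> (S1 *v (?x z + X *v ?y z)) + c * (?y z \<bullet> (X *v ?y z))" for z
  proof -
    have "z \<bullet> (?S *v z)
        = ?x z \<bullet> (S1 *v ?x z + S1 *v (X *v ?y z)) + ?y z \<bullet> (X *v (S1 *v ?x z) + S2 *v ?y z)"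
      unfolding inner_block[of z] block_fst_block_mat_mult block_snd_block_mat_mult
      by (simp add: matrix_vector_mul_assoc[symmetric])
    also have "\<dots> = (?x z + X *v ?y z) \<bullet> (S1 *v (?x z + X *v ?y z)) + c * (?y z \<bullet> (X *v ?y z))"
      using sym_matrix_inner[OF sX, of "?y z" "S1 *v ?x z"]
        sym_matrix_inner[OF sX, of "?y z" "S1 *v (X *v ?y z)"]
        sym_matrix_inner[OF sS1, of "?x z" "X *v ?y z"]
      by (simp add: S2v inner_add_left inner_add_right matrix_vector_right_distrib inner_commute)
    finally show ?thesis .
  qed
  have "0 < z \<bullet> (?S *v z)" if z: "z \<noteq> 0" for z
  proof (cases "block_snd z = 0")
    case True
    then have "block_fst z \<noteq> 0" using z block_eq_0_iff by blast
    then show ?thesis using S1 quad[of z] True by (simp add: pos_def_def)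
  next
    case False
    then have "0 < c * (block_snd z \<bullet> (X *v block_snd z))" using X c by (simp add: pos_def_def)
    moreover have "0 \<le> (block_fst z + X *v block_snd z) \<bullet> (S1 *v (block_fst z + X *v block_snd z))"
      by (rule pos_def_nonneg[OF S1])
    ultimately show ?thesis using quad[of z] by linarith
  qed
  then show ?thesis using sym unfolding pos_def_def by blast
qed

lemma riccati_block_inverse:
  fixes S1 S2 X :: "real^'n^'n"
  assumes S1: "invertible S1" and X: "invertible X" and ck: "c * k = 1"
    and eq: "X ** S1 ** X + c *\<^sub>R X = S2"
  shows "block_mat S1 (S1 ** X) (X ** S1) S2 **
         block_mat (matrix_inv S1 + k *\<^sub>R X) (- k *\<^sub>R mat 1) (- k *\<^sub>R mat 1) (k *\<^sub>R matrix_inv X)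
       = mat 1"
proof -
  have S1S1i: "A ** S1 ** matrix_inv S1 = A" for A
    by (metis S1 matrix_inv_right matrix_mul_assoc matrix_mul_rid)
  have XXi: "A ** X ** matrix_inv X = A" for A
    by (metis X matrix_inv_right matrix_mul_assoc matrix_mul_rid)
  have "S1 ** (matrix_inv S1 + k *\<^sub>R X) + S1 ** X ** (- k *\<^sub>R mat 1) = mat 1"
    using S1S1i[of "mat 1"] by (simp add: matrix_mult_simps)
  moreover have "S1 ** (- k *\<^sub>R mat 1) + S1 ** X ** (k *\<^sub>R matrix_inv X) = 0"
    using XXi[of "mat 1"] XXi[of S1] by (simp add: matrix_mult_simps)
  moreover have "X ** S1 ** (matrix_inv S1 + k *\<^sub>R X) + S2 ** (- k *\<^sub>R mat 1) = 0"
  proof -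
    have "X ** S1 ** (matrix_inv S1 + k *\<^sub>R X) + S2 ** (- k *\<^sub>R mat 1)
        = X + k *\<^sub>R (X ** S1 ** X) - k *\<^sub>R S2"
      by (simp add: matrix_mult_simps S1S1i)
    also have "\<dots> = (1 - k * c) *\<^sub>R X" by (simp add: eq[symmetric] algebra_simps)
    finally show ?thesis using ck by (simp add: mult.commute)
  qed
  moreover have "X ** S1 ** (- k *\<^sub>R mat 1) + S2 ** (k *\<^sub>R matrix_inv X) = mat 1"
  proof -
    have "S2 ** matrix_inv X = X ** S1 + c *\<^sub>R mat 1"
      unfolding eq[symmetric] using XXi[of "mat 1"] by (simp add: matrix_mult_simps XXi)
    then have "X ** S1 ** (- k *\<^sub>R mat 1) + S2 ** (k *\<^sub>R matrix_inv X) = (k * c) *\<^sub>R mat 1"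
      by (simp add: matrix_scaleR_right matrix_neg_right algebra_simps)
    then show ?thesis using ck by (simp add: mult.commute)
  qed
  ultimately show ?thesis by (simp add: block_mat_mult block_mat_id)
qed

theorem proposition1:
  fixes S1 S2 :: "real^'d^'d" and \<epsilon> :: real
  assumes "pos_def S1" and "pos_def S2" and "\<epsilon> > 0"
  shows "let Xe = matrix_inv (mat_sqrt S1)
                   ** mat_sqrt (mat_sqrt S1 ** S2 ** mat_sqrt S1 + (\<epsilon>/4)\<^sup>2 *\<^sub>R mat 1)
                   ** matrix_inv (mat_sqrt S1)
                 - (\<epsilon>/4) *\<^sub>R matrix_inv S1;
             Se = block_mat S1 (S1 ** Xe) (Xe ** S1) S2
         in (\<exists>!X. pos_def X \<and> X ** S1 ** X + (\<epsilon>/2) *\<^sub>R X = S2)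
            \<and> pos_def Xe \<and> Xe ** S1 ** Xe + (\<epsilon>/2) *\<^sub>R Xe = S2
            \<and> pos_def Se \<and> invertible Se
            \<and> matrix_inv Se =
                block_mat (matrix_inv S1 + (2/\<epsilon>) *\<^sub>R Xe) (- (2/\<epsilon>) *\<^sub>R mat 1)
                          (- (2/\<epsilon>) *\<^sub>R mat 1) ((2/\<epsilon>) *\<^sub>R matrix_inv Xe)"
proof -
  define Xe where "Xe = matrix_inv (mat_sqrt S1)
                   ** mat_sqrt (mat_sqrt S1 ** S2 ** mat_sqrt S1 + (\<epsilon>/4)\<^sup>2 *\<^sub>R mat 1)
                   ** matrix_inv (mat_sqrt S1)
                 - (\<epsilon>/4) *\<^sub>R matrix_inv S1"
  define Se where "Se = block_mat S1 (S1 ** Xe) (Xe ** S1) S2"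
  have half: "2 * (\<epsilon>/4) = \<epsilon>/2" by simp
  have c: "0 < \<epsilon>/4" using assms(3) by simp
  note solution = riccati_pos_def_solution[OF assms(1,2) c, folded Xe_def, unfolded half]
  note unique = riccati_pos_def_unique[OF assms(1,2) c, unfolded half]
  have "Se ** block_mat (matrix_inv S1 + (2/\<epsilon>) *\<^sub>R Xe) (- (2/\<epsilon>) *\<^sub>R mat 1)
                        (- (2/\<epsilon>) *\<^sub>R mat 1) ((2/\<epsilon>) *\<^sub>R matrix_inv Xe) = mat 1"
    unfolding Se_def using assms(3) solution(1,2)
    by (intro riccati_block_inverse pos_def_invertible assms(1)) simp_all
  moreover have "pos_def Se"
    unfolding Se_def using assms(3) solution(1,2) by (intro riccati_block_pos_def assms(1)) simp_all
  ultimately show ?thesis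
    unfolding Let_def Xe_def[symmetric] Se_def[symmetric]
    using solution unique invertible_right_inverse matrix_inv_eqI by blast
qed

end
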